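(* The master series specialize as follows (as power series in $x$, convergent in a neighbourhood of $0$): (i) for $a\neq0$: $M(1;a;0;x)=(1+ax)^{1/a}$ and $M(0;a;0;x)=\frac{\ln(1+ax)}{a}$ (principal branches); (ii) $M(1;0;0;x)=e^{x}$ and $M(0;0;0;x)=x$; (iii) for $b\neq0$: $y=M(1;0;b;x)$ satisfies $y=e^{x y^{b}}$, and $y=M(0;0;b;x)$ satisfies $y=x e^{by}$; moreover $M(0;0;b;x)=\frac{W_0(-bx)}{-b}$, in particular $M(0;0;-1;x)=W_0(x)$; (iv) for $a\neq0$: $y=M(0;a;b;x)$ satisfies $y=\frac{\ln(1+a x e^{b y})}{a}$.
   Context: For $m,a,b\in\mathbb{C}$ the master series is the power series $M(m;a;b;x)=m+x+\sum_{\ell\ge 2}\frac{x^\ell}{\ell!}\prod_{\gamma=1}^{\ell-1}(m-a\gamma+b\ell)$. $W_0$ is the principal branch of the Lambert $W$ function (the solution of $we^w=z$ analytic at $0$ with $W_0(0)=0$). Powers and logarithms of series with constant term $1$ are taken on the principal branch (i.e. $f^p=\exp(p\log f)$ with $\log 1=0$). *)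

theory Defs
  imports "HOL-Analysis.Analysis"
begin

definition master_coeff :: "complex \<Rightarrow> complex \<Rightarrow> complex \<Rightarrow> nat \<Rightarrow> complex" where
  "master_coeff m a b l =
     (if l = 0 then m
      else if l = 1 then 1
      else (\<Prod>g = 1..l - 1. m - a * of_nat g + b * of_nat l) / fact l)"

definition master_term :: "complex \<Rightarrow> complex \<Rightarrow> complex \<Rightarrow> complex \<Rightarrow> nat \<Rightarrow> complex" where
  "master_term m a b x l = master_coeff m a b l * x ^ l"

definition master :: "complex \<Rightarrow> complex \<Rightarrow> complex \<Rightarrow> complex \<Rightarrow> complex" where
  "master m a b x = (\<Sum>l. master_term m a b x l)"

end

(*
  Write S = M(0;a;b;x) and H_m = 1 + m (M(m;a;b;x) - m), the series whose coefficients are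
  m/n! prod_{g=1}^{n-1} (m - a g + b n).  A convolution identity of Hagen-Rothe type for these
  coefficients makes m |-> H_m multiplicative, and since dH_m/dm at m = 0 is S, we get
  H_m = exp (m S).  Now H_1 = M(1;a;b;x), and M(a;a;b;x) = a + x H_b, so
  M(1;a;b;x) = exp S,   exp (a S) = 1 + a x exp (b S),   and for a = 0:  S = x exp (b S).
  For small x the principal logarithm inverts exp near 0, which gives (i)-(iv); the Lambert W
  formula follows because w exp w is injective near 0.
*)

theory Submission
  imports Defs "HOL-Computational_Algebra.Polynomial" "HOL-Complex_Analysis.Conformal_Mappings"
begin

section \<open>Coefficient identities\<close>

lemma master_coeff_Suc:
  "master_coeff m a b (Suc n) = (\<Prod>g = 1..n. m - a * of_nat g + b * of_nat (Suc n)) / fact (Suc n)"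
  by (cases n) (simp_all add: master_coeff_def)

text \<open>The series H_m = 1 + m (M(m;a;b;x) - m); it is shown below to equal exp (m M(0;a;b;x)).\<close>

definition master_exp_coeff :: "complex \<Rightarrow> complex \<Rightarrow> complex \<Rightarrow> nat \<Rightarrow> complex" where
  "master_exp_coeff m a b n = (if n = 0 then 1 else m * master_coeff m a b n)"

definition master_exp :: "complex \<Rightarrow> complex \<Rightarrow> complex \<Rightarrow> complex \<Rightarrow> complex" where
  "master_exp m a b x = (\<Sum>n. master_exp_coeff m a b n * x ^ n)"

lemma master_exp_coeff_0 [simp]: "master_exp_coeff m a b 0 = 1"
  by (simp add: master_exp_coeff_def)

lemma master_exp_coeff_Suc: "master_exp_coeff m a b (Suc n) = m * master_coeff m a b (Suc n)"
  by (simp add: master_exp_coeff_def)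

lemma master_exp_coeff_param_0 [simp]: "master_exp_coeff 0 a b (Suc n) = 0"
  by (simp add: master_exp_coeff_def)

lemma prod_atLeast1_atMost_Suc:
  "(\<Prod>g = 1..Suc k. f g) = f 1 * (\<Prod>g = 1..k. f (Suc g))"
  by (simp add: prod.atLeast_Suc_atMost prod.shift_bounds_cl_Suc_ivl del: prod.cl_ivl_Suc)

lemma master_exp_coeff_shift:
  "master_exp_coeff (m + a) a b (Suc n) - master_exp_coeff m a b (Suc n)
     = a * master_exp_coeff (m + b) a b n"
proof (cases n)
  case 0
  then show ?thesis by (simp add: master_exp_coeff_def master_coeff_def)
next
  case (Suc k)
  define s where "s = m + b * of_nat (Suc (Suc k))"
  define P where "P = (\<Prod>g = 1..k. s - a * of_nat g)"
  have shifted: "(\<Prod>g = 1..Suc k. m + a - a * of_nat g + b * of_nat (Suc (Suc k))) = s * P"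
    unfolding P_def s_def by (subst prod_atLeast1_atMost_Suc) (simp add: algebra_simps)
  have unshifted:
    "(\<Prod>g = 1..Suc k. m - a * of_nat g + b * of_nat (Suc (Suc k))) = P * (s - a * of_nat (Suc k))"
    unfolding P_def s_def by (simp add: algebra_simps)
  have lower: "(\<Prod>g = 1..k. m + b - a * of_nat g + b * of_nat (Suc k)) = P"
    unfolding P_def s_def by (intro prod.cong) (auto simp: algebra_simps)
  have "master_exp_coeff (m + a) a b (Suc n) - master_exp_coeff m a b (Suc n)
      = ((m + a) * (s * P) - m * (P * (s - a * of_nat (Suc k)))) / fact (Suc (Suc k))"
    unfolding Suc master_exp_coeff_Suc master_coeff_Suc shifted unshifted
    by (simp add: diff_divide_distrib del: fact_Suc of_nat_Suc)
  also have "\<dots> = a * ((m + b) * P) * of_nat (Suc (Suc k)) / (of_nat (Suc (Suc k)) * fact (Suc k))"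
    by (simp add: s_def algebra_simps)
  also have "\<dots> = a * master_exp_coeff (m + b) a b n"
    unfolding Suc master_exp_coeff_Suc master_coeff_Suc lower by (simp del: fact_Suc of_nat_Suc)
  finally show ?thesis .
qed

lemma master_coeff_diag:
  "master_coeff a a b (Suc n) = master_exp_coeff b a b n"
proof (cases n)
  case 0
  then show ?thesis by (simp add: master_coeff_def)
next
  case (Suc k)
  define s where "s = b * of_nat (Suc (Suc k))"
  define P where "P = (\<Prod>g = 1..k. s - a * of_nat g)"
  have upper: "(\<Prod>g = 1..Suc k. a - a * of_nat g + b * of_nat (Suc (Suc k))) = s * P"
    unfolding P_def s_def by (subst prod_atLeast1_atMost_Suc) (simp add: algebra_simps)
  have lower: "(\<Prod>g = 1..k. b - a * of_nat g + b * of_nat (Suc k)) = P"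
    unfolding P_def s_def by (intro prod.cong) (auto simp: algebra_simps)
  have "master_coeff a a b (Suc n) = b * P * of_nat (Suc (Suc k)) / (of_nat (Suc (Suc k)) * fact (Suc k))"
    unfolding Suc master_coeff_Suc upper by (simp add: s_def algebra_simps)
  also have "\<dots> = master_exp_coeff b a b n"
    unfolding Suc master_exp_coeff_Suc master_coeff_Suc lower by (simp del: fact_Suc of_nat_Suc)
  finally show ?thesis .
qed

lemma master_exp_coeff_poly: "\<exists>p. \<forall>m. master_exp_coeff m a b n = poly p m"
proof (cases n)
  case 0
  then show ?thesis by (intro exI[of _ 1]) simp
next
  case (Suc k)
  let ?p = "smult (inverse (fact (Suc k)))
              ([:0, 1:] * (\<Prod>g = 1..k. [:b * of_nat (Suc k) - a * of_nat g, 1:]))"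
  have "master_exp_coeff m a b n = poly ?p m" for m
    by (simp add: Suc master_exp_coeff_Suc master_coeff_Suc poly_prod algebra_simps divide_inverse
             del: prod.cl_ivl_Suc)
  then show ?thesis by blast
qed

lemma poly_eq_0_if_roots_at_multiples:
  fixes p :: "'a::field_char_0 poly"
  assumes "a \<noteq> 0" and "\<And>j::nat. poly p (of_nat j * a) = 0"
  shows "p = 0"
proof (rule ccontr)
  assume "p \<noteq> 0"
  have "range (\<lambda>j::nat. of_nat j * a) \<subseteq> {x. poly p x = 0}"
    using assms(2) by auto
  moreover have "infinite (range (\<lambda>j::nat. of_nat j * a))"
    using assms(1) by (intro range_inj_infinite) (auto simp: inj_on_def)
  ultimately show False
    using poly_roots_finite[OF \<open>p \<noteq> 0\<close>] finite_subset by blast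
qed

lemma continuous_on_master_coeff [continuous_intros]:
  assumes "continuous_on A m" "continuous_on A a" "continuous_on A b"
  shows "continuous_on A (\<lambda>z. master_coeff (m z) (a z) (b z) n)"
  unfolding master_coeff_def using assms by (cases "n = 0"; cases "n = 1") (auto intro!: continuous_intros)

lemma continuous_on_master_exp_coeff [continuous_intros]:
  assumes "continuous_on A m" "continuous_on A a" "continuous_on A b"
  shows "continuous_on A (\<lambda>z. master_exp_coeff (m z) (a z) (b z) n)"
  unfolding master_exp_coeff_def using assms by (cases "n = 0") (auto intro!: continuous_intros)

text \<open>The defect of the identity is a polynomial in m.  By the shift identity it is a-periodic
  once the identity holds for n - 1, and it vanishes at m = 0.\<close>

lemma master_exp_coeff_convolution_nonzero:
  assumes "a \<noteq> 0"
  shows "(\<Sum>k\<le>n. master_exp_coeff m a b k * master_exp_coeff t a b (n - k)) = master_exp_coeff (m + t) a b n"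
proof -
  define D where "D n m =
      (\<Sum>k\<le>n. master_exp_coeff m a b k * master_exp_coeff t a b (n - k)) - master_exp_coeff (m + t) a b n"
    for n m
  have shift: "D (Suc n) (m + a) - D (Suc n) m = a * D n (m + b)" for n m
  proof -
    have "D (Suc n) (m + a) - D (Suc n) m =
        (\<Sum>k\<le>Suc n. (master_exp_coeff (m + a) a b k - master_exp_coeff m a b k)
                       * master_exp_coeff t a b (Suc n - k))
        - (master_exp_coeff ((m + t) + a) a b (Suc n) - master_exp_coeff (m + t) a b (Suc n))"
      unfolding D_def by (simp add: sum_subtractf algebra_simps)
    also have "\<dots> = (\<Sum>k\<le>n. a * master_exp_coeff (m + b) a b k * master_exp_coeff t a b (n - k))
        - a * master_exp_coeff ((m + t) + b) a b n"
      by (subst sum.atMost_Suc_shift) (simp add: master_exp_coeff_shift)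
    also have "\<dots> = a * D n (m + b)"
      unfolding D_def by (simp add: sum_distrib_left algebra_simps)
    finally show ?thesis .
  qed
  obtain P where P: "\<And>k m. master_exp_coeff m a b k = poly (P k) m"
    using master_exp_coeff_poly by metis
  have "D n m = 0" for m
  proof (induction n arbitrary: m)
    case 0
    then show ?case by (simp add: D_def)
  next
    case (Suc n)
    have periodic: "D (Suc n) (m + a) = D (Suc n) m" for m
      using shift[of n m] Suc.IH by simp
    have multiples: "D (Suc n) (of_nat j * a) = 0" for j
    proof (induction j)
      case 0
      then show ?case by (simp add: D_def sum.atMost_Suc_shift del: sum.atMost_Suc)
    next
      case (Suc j)
      then show ?case using periodic[of "of_nat j * a"] by (simp add: algebra_simps)
    qed
    let ?p = "(\<Sum>k\<le>Suc n. P k * [:master_exp_coeff t a b (Suc n - k):])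
              - pcompose (P (Suc n)) [:t, 1:]"
    have D_poly: "D (Suc n) m = poly ?p m" for m
      unfolding D_def by (simp add: P poly_sum poly_pcompose algebra_simps)
    have "?p = 0"
      using multiples D_poly by (intro poly_eq_0_if_roots_at_multiples[OF assms]) metis
    then show ?case by (simp add: D_poly)
  qed
  then show ?thesis by (simp add: D_def)
qed

lemma master_exp_coeff_convolution:
  "(\<Sum>k\<le>n. master_exp_coeff m a b k * master_exp_coeff t a b (n - k)) = master_exp_coeff (m + t) a b n"
proof -
  let ?D = "\<lambda>a. (\<Sum>k\<le>n. master_exp_coeff m a b k * master_exp_coeff t a b (n - k))
                  - master_exp_coeff (m + t) a b n"
  have "continuous_on (closure (- {0})) ?D"
    by (intro continuous_intros)
  then have "?D a = 0"
    by (rule continuous_constant_on_closure)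
       (auto simp: closure_complement master_exp_coeff_convolution_nonzero)
  then show ?thesis by simp
qed

section \<open>Convergence\<close>

lemma power_div_fact_le_exp:
  fixes x :: real
  assumes "0 \<le> x"
  shows "x ^ n / fact n \<le> exp x"
proof -
  have exp_sums: "(\<lambda>k. x ^ k /\<^sub>R fact k) sums exp x"
    by (rule exp_converges)
  have "sum (\<lambda>k. x ^ k /\<^sub>R fact k) {n} \<le> (\<Sum>k. x ^ k /\<^sub>R fact k)"
    using exp_sums assms by (intro sum_le_suminf) (auto simp: sums_iff)
  then show ?thesis
    using exp_sums by (simp add: sums_iff divide_inverse mult.commute)
qed

lemma norm_master_coeff_Suc_le:
  assumes K: "norm m + norm a + norm b \<le> K" "1 \<le> K"
  shows "norm (master_coeff m a b (Suc n)) \<le> (exp 1 * K) ^ Suc n"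
proof -
  have factor_le: "norm (m - a * of_nat g + b * of_nat (Suc n)) \<le> K * of_nat (Suc n)"
    if "g \<in> {1..n}" for g
  proof -
    have "norm (m - a * of_nat g + b * of_nat (Suc n))
        \<le> norm m + norm (a * of_nat g) + norm (b * of_nat (Suc n))"
      using norm_triangle_ineq4[of m "a * of_nat g"]
        norm_triangle_ineq[of "m - a * of_nat g" "b * of_nat (Suc n)"] by linarith
    also have "\<dots> = norm m + norm a * g + norm b * Suc n"
      by (simp add: norm_mult del: of_nat_Suc)
    also have "\<dots> \<le> (norm m + norm a + norm b) * Suc n"
      using that mult_left_mono[of 1 "real (Suc n)" "norm m"]
        mult_left_mono[of "real g" "real (Suc n)" "norm a"]
      by (simp only: distrib_right) auto
    also have "\<dots> \<le> K * Suc n"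
      using K by (intro mult_right_mono) auto
    finally show ?thesis .
  qed
  have "norm (\<Prod>g = 1..n. m - a * of_nat g + b * of_nat (Suc n)) \<le> (K * Suc n) ^ n"
    using prod_mono[of "{1..n}", OF conjI[OF norm_ge_zero factor_le]]
    by (simp add: prod_norm)
  also have "\<dots> \<le> (K * Suc n) ^ Suc n"
    using K mult_mono[of 1 K 1 "real (Suc n)"] by (intro power_increasing) auto
  finally have prod_le:
    "norm (\<Prod>g = 1..n. m - a * of_nat g + b * of_nat (Suc n)) \<le> K ^ Suc n * real (Suc n) ^ Suc n"
    by (simp only: power_mult_distrib)
  have "norm (master_coeff m a b (Suc n))
      = norm (\<Prod>g = 1..n. m - a * of_nat g + b * of_nat (Suc n)) / fact (Suc n)"
    by (simp add: master_coeff_Suc norm_divide del: of_nat_Suc fact_Suc prod.cl_ivl_Suc)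
  also have "\<dots> \<le> K ^ Suc n * (real (Suc n) ^ Suc n / fact (Suc n))"
    using divide_right_mono[OF prod_le, of "fact (Suc n)"] by simp
  also have "\<dots> \<le> K ^ Suc n * exp (Suc n)"
    using K by (intro mult_left_mono power_div_fact_le_exp) auto
  also have "\<dots> = (exp 1 * K) ^ Suc n"
    by (simp add: power_mult_distrib exp_add exp_of_nat_mult[symmetric])
  finally show ?thesis .
qed

text \<open>The parameters m range over the closed disc of radius master_param_bound a b, which contains
  0, 1, a and b in its interior; for norm x \<le> master_radius a b all the series converge
  geometrically, uniformly in m.\<close>

definition master_param_bound :: "complex \<Rightarrow> complex \<Rightarrow> real" where
  "master_param_bound a b = norm a + norm b + 2"

definition master_radius :: "complex \<Rightarrow> complex \<Rightarrow> real" where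
  "master_radius a b = 1 / (4 * exp 1 * master_param_bound a b)"

lemma master_param_bound_gt:
  "norm a < master_param_bound a b" "norm b < master_param_bound a b" "1 < master_param_bound a b"
  unfolding master_param_bound_def using norm_ge_zero[of a] norm_ge_zero[of b] by linarith+

lemma master_radius_pos: "0 < master_radius a b"
  using master_param_bound_gt(3)[of a b] by (simp add: master_radius_def)

lemma norm_master_coeff_power_le:
  assumes m: "norm m \<le> master_param_bound a b" and x: "norm x \<le> master_radius a b"
  shows "norm (master_coeff m a b (Suc n) * x ^ Suc n) \<le> (1 / 2) ^ Suc n"
proof -
  define R where "R = master_param_bound a b"
  have R: "1 < R" "norm m + norm a + norm b \<le> 2 * R"
    using master_param_bound_gt[of a b] m by (auto simp: R_def master_param_bound_def)
  have "norm (master_coeff m a b (Suc n) * x ^ Suc n) \<le> (exp 1 * (2 * R)) ^ Suc n * norm x ^ Suc n"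
    unfolding norm_mult norm_power using R by (intro mult_right_mono norm_master_coeff_Suc_le) auto
  also have "\<dots> = (2 * exp 1 * R * norm x) ^ Suc n"
    by (simp add: power_mult_distrib)
  also have "\<dots> \<le> (2 * exp 1 * R * master_radius a b) ^ Suc n"
    using R x by (intro power_mono mult_left_mono) auto
  also have "2 * exp 1 * R * master_radius a b = 1 / 2"
    using R by (simp add: master_radius_def R_def)
  finally show ?thesis .
qed

lemma norm_master_term_le:
  assumes "norm m \<le> master_param_bound a b" and "norm x \<le> master_radius a b"
  shows "norm (master_term m a b x n) \<le> master_param_bound a b * (1 / 2) ^ n"
proof (cases n)
  case 0
  then show ?thesis using assms by (simp add: master_term_def master_coeff_def)
next
  case (Suc k)
  have "norm (master_term m a b x n) \<le> 1 * (1 / 2) ^ n"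
    using norm_master_coeff_power_le[OF assms] by (simp add: master_term_def Suc)
  also have "\<dots> \<le> master_param_bound a b * (1 / 2) ^ n"
    using master_param_bound_gt(3)[of a b] by (intro mult_right_mono) auto
  finally show ?thesis .
qed

lemma norm_master_exp_term_le:
  assumes "norm m \<le> master_param_bound a b" and "norm x \<le> master_radius a b"
  shows "norm (master_exp_coeff m a b n * x ^ n) \<le> master_param_bound a b * (1 / 2) ^ n"
proof (cases n)
  case 0
  then show ?thesis using master_param_bound_gt(3)[of a b] by simp
next
  case (Suc k)
  have "norm (master_exp_coeff m a b n * x ^ n) = norm m * norm (master_coeff m a b (Suc k) * x ^ Suc k)"
    by (simp add: Suc master_exp_coeff_Suc norm_mult)
  also have "\<dots> \<le> master_param_bound a b * (1 / 2) ^ n"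
    using assms(1) order_trans[OF norm_ge_zero assms(1)] norm_master_coeff_power_le[OF assms, of k]
    by (intro mult_mono) (auto simp: Suc simp del: power_Suc)
  finally show ?thesis .
qed

lemma summable_norm_master_term:
  assumes "norm m \<le> master_param_bound a b" and "norm x \<le> master_radius a b"
  shows "summable (\<lambda>n. norm (master_term m a b x n))"
proof (rule summable_comparison_test')
  show "summable (\<lambda>n. master_param_bound a b * (1 / 2) ^ n)"
    by (intro summable_mult summable_geometric) simp
  show "norm (norm (master_term m a b x n)) \<le> master_param_bound a b * (1 / 2) ^ n" for n
    using norm_master_term_le[OF assms] by simp
qed

lemma summable_norm_master_exp_term:
  assumes "norm m \<le> master_param_bound a b" and "norm x \<le> master_radius a b"
  shows "summable (\<lambda>n. norm (master_exp_coeff m a b n * x ^ n))"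
proof (rule summable_comparison_test')
  show "summable (\<lambda>n. master_param_bound a b * (1 / 2) ^ n)"
    by (intro summable_mult summable_geometric) simp
  show "norm (norm (master_exp_coeff m a b n * x ^ n)) \<le> master_param_bound a b * (1 / 2) ^ n" for n
    using norm_master_exp_term_le[OF assms] by simp
qed

section \<open>The exponential law in the parameter\<close>

lemma master_term_sums:
  assumes "norm m \<le> master_param_bound a b" and "norm x \<le> master_radius a b"
  shows "master_term m a b x sums master m a b x"
  unfolding master_def
  by (rule summable_sums[OF summable_norm_cancel[OF summable_norm_master_term[OF assms]]])

lemma master_exp_term_sums:
  assumes "norm m \<le> master_param_bound a b" and "norm x \<le> master_radius a b"
  shows "(\<lambda>n. master_exp_coeff m a b n * x ^ n) sums master_exp m a b x"
  unfolding master_exp_def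
  by (rule summable_sums[OF summable_norm_cancel[OF summable_norm_master_exp_term[OF assms]]])

lemma master_exp_eq_master:
  assumes "norm m \<le> master_param_bound a b" and "norm x \<le> master_radius a b"
  shows "master_exp m a b x = 1 + m * (master m a b x - m)"
proof -
  have "(\<lambda>n. m * master_term m a b x n + (if n = 0 then 1 - m * m else 0))
          sums (m * master m a b x + (1 - m * m))"
    by (intro sums_add sums_mult master_term_sums[OF assms] sums_single)
  moreover have "m * master_term m a b x n + (if n = 0 then 1 - m * m else 0)
                   = master_exp_coeff m a b n * x ^ n" for n
    by (simp add: master_term_def master_exp_coeff_def master_coeff_def)
  ultimately have "(\<lambda>n. master_exp_coeff m a b n * x ^ n) sums (m * master m a b x + (1 - m * m))"
    by simp
  then show ?thesis
    using master_exp_term_sums[OF assms] sums_unique2 by (fastforce simp: algebra_simps)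
qed

lemma master_diag_master_exp:
  assumes "norm x \<le> master_radius a b"
  shows "master a a b x = a + x * master_exp b a b x"
proof -
  have "(\<lambda>n. x * (master_exp_coeff b a b n * x ^ n)) sums (x * master_exp b a b x)"
    using master_exp_term_sums[OF less_imp_le[OF master_param_bound_gt(2)] assms] by (rule sums_mult)
  moreover have "x * (master_exp_coeff b a b n * x ^ n) = master_term a a b x (Suc n)" for n
    by (simp add: master_term_def master_coeff_diag)
  ultimately have "master_term a a b x sums (x * master_exp b a b x + master_term a a b x 0)"
    by (intro sums_Suc) simp
  moreover have "master_term a a b x 0 = a"
    by (simp add: master_term_def master_coeff_def)
  ultimately show ?thesis
    by (simp add: master_def sums_iff add.commute)
qed

lemma master_exp_add:
  assumes "norm m \<le> master_param_bound a b" "norm t \<le> master_param_bound a b"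
    and "norm x \<le> master_radius a b"
  shows "master_exp (m + t) a b x = master_exp m a b x * master_exp t a b x"
proof -
  have "master_exp m a b x * master_exp t a b x
      = (\<Sum>n. \<Sum>k\<le>n. (master_exp_coeff m a b k * x ^ k) * (master_exp_coeff t a b (n - k) * x ^ (n - k)))"
    unfolding master_exp_def
    by (intro Cauchy_product summable_norm_master_exp_term assms)
  also have "\<dots> = (\<Sum>n. (\<Sum>k\<le>n. master_exp_coeff m a b k * master_exp_coeff t a b (n - k)) * x ^ n)"
  proof (intro suminf_cong)
    fix n
    have "(master_exp_coeff m a b k * x ^ k) * (master_exp_coeff t a b (n - k) * x ^ (n - k))
        = master_exp_coeff m a b k * master_exp_coeff t a b (n - k) * x ^ n" if "k \<le> n" for k
      using that by (metis (no_types, lifting) le_add_diff_inverse mult.assoc mult.left_commute power_add)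
    then show "(\<Sum>k\<le>n. (master_exp_coeff m a b k * x ^ k) * (master_exp_coeff t a b (n - k) * x ^ (n - k)))
        = (\<Sum>k\<le>n. master_exp_coeff m a b k * master_exp_coeff t a b (n - k)) * x ^ n"
      unfolding sum_distrib_right by (intro sum.cong) auto
  qed
  also have "\<dots> = master_exp (m + t) a b x"
    by (simp add: master_exp_def master_exp_coeff_convolution)
  finally show ?thesis ..
qed

lemma continuous_on_master_param:
  assumes "norm x \<le> master_radius a b"
  shows "continuous_on (cball 0 (master_param_bound a b)) (\<lambda>m. master m a b x)"
proof -
  have "uniform_limit (cball 0 (master_param_bound a b))
          (\<lambda>n m. \<Sum>i<n. master_term m a b x i) (\<lambda>m. \<Sum>i. master_term m a b x i) sequentially"
    using norm_master_term_le[OF _ assms]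
    by (intro Weierstrass_m_test[where M = "\<lambda>n. master_param_bound a b * (1 / 2) ^ n"])
       (auto intro!: summable_mult summable_geometric)
  then show ?thesis
    unfolding master_def master_term_def
    by (rule uniform_limit_theorem[rotated]) (auto intro!: always_eventually continuous_intros)
qed

lemma has_field_derivative_master_exp:
  assumes x: "norm x \<le> master_radius a b" and m: "norm m < master_param_bound a b"
  shows "((\<lambda>m. master_exp m a b x) has_field_derivative master_exp m a b x * master 0 a b x) (at m)"
proof -
  define R where "R = master_param_bound a b"
  have "isCont (\<lambda>t. master t a b x) 0"
    using continuous_on_interior[OF continuous_on_master_param[OF x], of 0] master_param_bound_gt(3)[of a b]
    by simp
  then have "((\<lambda>y. master (y - m) a b x) \<longlongrightarrow> master 0 a b x) (at m)"
    by (rule isCont_tendsto_compose) (auto intro!: tendsto_eq_intros)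
  then have limit: "((\<lambda>y. master_exp m a b x * (master (y - m) a b x - (y - m)))
                      \<longlongrightarrow> master_exp m a b x * master 0 a b x) (at m)"
    by (auto intro!: tendsto_eq_intros)
  have "\<forall>\<^sub>F y in at m. master_exp m a b x * (master (y - m) a b x - (y - m))
                      = (master_exp y a b x - master_exp m a b x) / (y - m)"
    unfolding eventually_at
  proof (intro exI[of _ "R - norm m"] conjI ballI impI)
    show "0 < R - norm m"
      using m by (simp add: R_def)
    fix y assume y: "y \<noteq> m \<and> dist y m < R - norm m"
    have "norm (y - m) \<le> R"
      using y norm_ge_zero[of m] unfolding dist_norm by linarith
    then have "master_exp y a b x = master_exp m a b x * (1 + (y - m) * (master (y - m) a b x - (y - m)))"
      using master_exp_add[of m a b "y - m" x] master_exp_eq_master[of "y - m" a b x] m x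
      by (simp add: R_def)
    then show "master_exp m a b x * (master (y - m) a b x - (y - m))
             = (master_exp y a b x - master_exp m a b x) / (y - m)"
      using y by (simp add: field_simps)
  qed
  then show ?thesis
    unfolding has_field_derivative_iff by (rule Lim_transform_eventually[OF limit])
qed

lemma master_exp_eq_exp:
  assumes x: "norm x \<le> master_radius a b" and m: "norm m < master_param_bound a b"
  shows "master_exp m a b x = exp (m * master 0 a b x)"
proof -
  define S where "S = master 0 a b x"
  define g where "g y = master_exp y a b x * exp (- (y * S))" for y
  have "(g has_field_derivative 0) (at y within ball 0 (master_param_bound a b))"
    if "y \<in> ball 0 (master_param_bound a b)" for y
  proof -
    have "((\<lambda>y. exp (- (y * S))) has_field_derivative exp (- (y * S)) * - S) (at y)"
      by (auto intro!: derivative_eq_intros)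
    from DERIV_mult[OF has_field_derivative_master_exp[OF x] this]
    have "(g has_field_derivative 0) (at y)"
      using that by (simp add: g_def[abs_def] S_def)
    then show ?thesis
      by (rule has_field_derivative_at_within)
  qed
  then obtain c where c: "\<And>y. y \<in> ball 0 (master_param_bound a b) \<Longrightarrow> g y = c"
    using has_field_derivative_zero_constant[of "ball 0 (master_param_bound a b)" g] by auto
  have "g 0 = 1"
    using master_exp_eq_master[of 0 a b x] x master_param_bound_gt(3)[of a b] by (simp add: g_def)
  then have "g m = 1"
    using c[of 0] c[of m] m master_param_bound_gt(3)[of a b] by simp
  then show ?thesis
    by (simp add: g_def S_def exp_minus field_simps)
qed

lemma master_one_eq_exp:
  assumes "norm x \<le> master_radius a b"
  shows "master 1 a b x = exp (master 0 a b x)"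
  using master_exp_eq_master[of 1 a b x] master_exp_eq_exp[of x a b 1] master_param_bound_gt(3)[of a b] assms
  by simp

lemma master_diag_exp:
  assumes "norm x \<le> master_radius a b"
  shows "master a a b x = a + x * exp (b * master 0 a b x)"
  using master_diag_master_exp[OF assms] master_exp_eq_exp[OF assms master_param_bound_gt(2)] by simp

lemma exp_master_eq:
  assumes "norm x \<le> master_radius a b"
  shows "exp (a * master 0 a b x) = 1 + a * x * exp (b * master 0 a b x)"
proof -
  have "exp (a * master 0 a b x) = master_exp a a b x"
    using master_exp_eq_exp[OF assms master_param_bound_gt(1)] by simp
  also have "\<dots> = 1 + a * (master a a b x - a)"
    using master_exp_eq_master[OF less_imp_le[OF master_param_bound_gt(1)] assms] .
  finally show ?thesis
    by (simp add: master_diag_exp[OF assms] algebra_simps)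
qed

section \<open>Specialisations\<close>

lemma eventually_norm_le_master_radius: "\<forall>\<^sub>F x in nhds 0. norm x \<le> master_radius a b"
proof -
  have "\<forall>\<^sub>F x in nhds 0. x \<in> ball 0 (master_radius a b)"
    using master_radius_pos by (intro eventually_nhds_in_open) auto
  then show ?thesis
    by eventually_elim simp
qed

lemma eventually_summable_master_term:
  assumes "norm m \<le> 1"
  shows "\<forall>\<^sub>F x in nhds 0. summable (master_term m a b x)"
proof -
  have m: "norm m \<le> master_param_bound a b"
    using assms master_param_bound_gt(3)[of a b] by simp
  show ?thesis
    using eventually_norm_le_master_radius
    by eventually_elim (rule summable_norm_cancel[OF summable_norm_master_term[OF m]])
qed

lemma master_0_tendsto_0: "(master 0 a b \<longlongrightarrow> 0) (nhds 0)"
proof -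
  define K where "K = complex_of_real (master_radius a b)"
  have "summable (\<lambda>n. master_coeff 0 a b n * K ^ n)"
    using summable_norm_cancel[OF summable_norm_master_term[of 0 a b K]]
      master_radius_pos[of a b] master_param_bound_gt(3)[of a b]
    by (simp add: K_def master_term_def)
  then have "isCont (\<lambda>x. \<Sum>n. master_coeff 0 a b n * x ^ n) 0"
    by (rule isCont_powser) (use master_radius_pos[of a b] in \<open>simp add: K_def\<close>)
  moreover have "master 0 a b 0 = 0"
    by (simp add: master_def master_term_def master_coeff_def)
  moreover have "master 0 a b = (\<lambda>x. \<Sum>n. master_coeff 0 a b n * x ^ n)"
    by (simp add: fun_eq_iff master_def master_term_def)
  ultimately show ?thesis
    by (simp add: tendsto_nhds_iff isCont_def)
qed

lemma eventually_norm_mult_master_less: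
  assumes "0 < e"
  shows "\<forall>\<^sub>F x in nhds 0. norm (c * master 0 a b x) < e"
proof -
  have "((\<lambda>x. norm (c * master 0 a b x)) \<longlongrightarrow> 0) (nhds 0)"
    using tendsto_norm[OF tendsto_mult_left[OF master_0_tendsto_0, of c]] by simp
  then show ?thesis
    using assms by (rule order_tendstoD)
qed

lemma Ln_exp_of_norm_less_pi: "norm z < pi \<Longrightarrow> Ln (exp z) = z"
  using abs_Im_le_cmod[of z] by (intro Ln_exp) auto

lemma master_binomial:
  assumes "a \<noteq> 0"
  shows "\<forall>\<^sub>F x in nhds 0. summable (master_term 1 a 0 x) \<and> master 1 a 0 x = (1 + a * x) powr (1 / a)"
  using eventually_norm_le_master_radius[of a 0] eventually_norm_mult_master_less[OF pi_gt_zero, of a a 0]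
    eventually_summable_master_term[of 1 a 0, simplified]
proof eventually_elim
  case (elim x)
  have base: "1 + a * x = exp (a * master 0 a 0 x)"
    using exp_master_eq[OF elim(1)] by simp
  then have "Ln (1 + a * x) = a * master 0 a 0 x"
    using elim(2) by (simp add: Ln_exp_of_norm_less_pi)
  then have "(1 + a * x) powr (1 / a) = exp (master 0 a 0 x)"
    using assms base by (simp add: powr_def)
  then show ?case
    using elim(3) master_one_eq_exp[OF elim(1)] by simp
qed

lemma master_logarithmic:
  assumes "a \<noteq> 0"
  shows "\<forall>\<^sub>F x in nhds 0. summable (master_term 0 a b x) \<and>
           master 0 a b x = Ln (1 + a * x * exp (b * master 0 a b x)) / a"
  using eventually_norm_le_master_radius[of a b] eventually_norm_mult_master_less[OF pi_gt_zero, of a a b]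
    eventually_summable_master_term[of 0 a b, simplified]
proof eventually_elim
  case (elim x)
  have "Ln (1 + a * x * exp (b * master 0 a b x)) = a * master 0 a b x"
    using elim(2) by (simp add: Ln_exp_of_norm_less_pi flip: exp_master_eq[OF elim(1)])
  then show ?case
    using assms elim(3) by simp
qed

lemma master_0_0_functional_eq:
  "\<forall>\<^sub>F x in nhds 0. summable (master_term 0 0 b x) \<and> master 0 0 b x = x * exp (b * master 0 0 b x)"
  using eventually_norm_le_master_radius[of 0 b] eventually_summable_master_term[of 0 0 b, simplified]
  by eventually_elim (use master_diag_exp[of _ 0 b] in simp)

lemma master_1_0_functional_eq:
  "\<forall>\<^sub>F x in nhds 0. summable (master_term 1 0 b x) \<and> master 1 0 b x = exp (x * master 1 0 b x powr b)"
  using eventually_norm_le_master_radius[of 0 b] eventually_norm_mult_master_less[OF pi_gt_zero, of 1 0 b]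
    eventually_summable_master_term[of 1 0 b, simplified]
proof eventually_elim
  case (elim x)
  define S where "S = master 0 0 b x"
  have "master 1 0 b x powr b = exp (b * S)"
    using elim(2) master_one_eq_exp[OF elim(1)] by (simp add: powr_def Ln_exp_of_norm_less_pi S_def)
  then have "exp (x * master 1 0 b x powr b) = exp S"
    using master_diag_exp[OF elim(1)] by (simp add: S_def)
  then show ?case
    using elim(3) master_one_eq_exp[OF elim(1)] by (simp add: S_def)
qed

lemma master_exponential:
  "\<forall>\<^sub>F x in nhds 0. summable (master_term 1 0 0 x) \<and> master 1 0 0 x = exp x"
  "\<forall>\<^sub>F x in nhds 0. summable (master_term 0 0 0 x) \<and> master 0 0 0 x = x"
  using master_0_0_functional_eq[of 0] eventually_norm_le_master_radius[of 0 0]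
    eventually_summable_master_term[of 1 0 0, simplified]
  by (eventually_elim; use master_one_eq_exp[of _ 0 0] in simp)+

lemma mult_exp_locally_injective:
  obtains r where "0 < r" "inj_on (\<lambda>w::complex. w * exp w) (ball 0 r)"
proof (rule has_complex_derivative_locally_injective[of "\<lambda>w. w * exp w" UNIV 0])
  have "((\<lambda>w::complex. w * exp w) has_field_derivative 1) (at 0)"
    by (auto intro!: derivative_eq_intros)
  then have "deriv (\<lambda>w::complex. w * exp w) 0 = 1"
    by (rule DERIV_imp_deriv)
  then show "deriv (\<lambda>w::complex. w * exp w) 0 \<noteq> 0"
    by simp
qed (use that in \<open>auto intro!: holomorphic_intros\<close>)

lemma eventually_eq_of_mult_exp_eq:
  fixes u v :: "'a \<Rightarrow> complex"
  assumes "(u \<longlongrightarrow> 0) F" "(v \<longlongrightarrow> 0) F" "\<forall>\<^sub>F z in F. u z * exp (u z) = v z * exp (v z)"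
  shows "\<forall>\<^sub>F z in F. u z = v z"
proof -
  obtain r where r: "0 < r" "inj_on (\<lambda>w::complex. w * exp w) (ball 0 r)"
    by (rule mult_exp_locally_injective)
  have "\<forall>\<^sub>F z in F. dist (u z) 0 < r" "\<forall>\<^sub>F z in F. dist (v z) 0 < r"
    using tendstoD[OF assms(1) r(1)] tendstoD[OF assms(2) r(1)] .
  with assms(3) show ?thesis
    by eventually_elim (auto intro: inj_onD[OF r(2)] simp: dist_commute)
qed

lemma master_Lambert:
  fixes W :: "complex \<Rightarrow> complex"
  assumes "b \<noteq> 0" and "W analytic_on {0}" "W 0 = 0" "\<forall>\<^sub>F z in nhds 0. W z * exp (W z) = z"
  shows "\<forall>\<^sub>F x in nhds 0. master 0 0 b x = W (- b * x) / (- b)"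
proof -
  have scale: "filterlim (\<lambda>x. - b * x) (nhds 0) (nhds 0)"
    using tendsto_mult_left[OF filterlim_ident[of "nhds (0::complex)"], of "- b"] by simp
  have "((\<lambda>x. - b * master 0 0 b x) \<longlongrightarrow> 0) (nhds 0)"
    using tendsto_mult_left[OF master_0_tendsto_0, of "- b"] by simp
  moreover have "((\<lambda>x. W (- b * x)) \<longlongrightarrow> 0) (nhds 0)"
    using isCont_tendsto_compose[OF analytic_at_imp_isCont[OF assms(2)] scale] assms(3) by simp
  moreover have "\<forall>\<^sub>F x in nhds 0. - b * master 0 0 b x * exp (- b * master 0 0 b x)
                                  = W (- b * x) * exp (W (- b * x))"
    using master_0_0_functional_eq[of b] eventually_compose_filterlim[OF assms(4) scale]
  proof eventually_elim
    case (elim x)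
    have "- b * master 0 0 b x * exp (- b * master 0 0 b x)
        = - b * x * (exp (b * master 0 0 b x) * exp (- (b * master 0 0 b x)))"
      by (subst (1) elim(1)[THEN conjunct2]) (simp add: algebra_simps)
    also have "\<dots> = W (- b * x) * exp (W (- b * x))"
      using elim(2) by (simp flip: exp_add)
    finally show ?case .
  qed
  ultimately have "\<forall>\<^sub>F x in nhds 0. - b * master 0 0 b x = W (- b * x)"
    by (rule eventually_eq_of_mult_exp_eq)
  then show ?thesis
  proof eventually_elim
    case (elim x)
    show ?case
      by (subst elim[symmetric]) (use assms(1) in simp)
  qed
qed

theorem mainTheorem8:
  fixes a b :: complex
  shows
   "(a \<noteq> 0 \<longrightarrow>
       (\<forall>\<^sub>F x in nhds 0. summable (master_term 1 a 0 x) \<and>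
           master 1 a 0 x = (1 + a * x) powr (1 / a)) \<and>
       (\<forall>\<^sub>F x in nhds 0. summable (master_term 0 a 0 x) \<and>
           master 0 a 0 x = Ln (1 + a * x) / a))
    \<and> (\<forall>\<^sub>F x in nhds 0. summable (master_term 1 0 0 x) \<and> master 1 0 0 x = exp x)
    \<and> (\<forall>\<^sub>F x in nhds 0. summable (master_term 0 0 0 x) \<and> master 0 0 0 x = x)
    \<and> (b \<noteq> 0 \<longrightarrow>
       (\<forall>\<^sub>F x in nhds 0. summable (master_term 1 0 b x) \<and>
           master 1 0 b x = exp (x * (master 1 0 b x) powr b)) \<and>
       (\<forall>\<^sub>F x in nhds 0. summable (master_term 0 0 b x) \<and>
           master 0 0 b x = x * exp (b * master 0 0 b x)) \<and>
       (\<forall>W :: complex \<Rightarrow> complex.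
          W analytic_on {0} \<and> W 0 = 0 \<and> (\<forall>\<^sub>F z in nhds 0. W z * exp (W z) = z) \<longrightarrow>
          (\<forall>\<^sub>F x in nhds 0. master 0 0 b x = W (- b * x) / (- b))))
    \<and> (\<forall>W :: complex \<Rightarrow> complex.
          W analytic_on {0} \<and> W 0 = 0 \<and> (\<forall>\<^sub>F z in nhds 0. W z * exp (W z) = z) \<longrightarrow>
          (\<forall>\<^sub>F x in nhds 0. summable (master_term 0 0 (-1) x) \<and> master 0 0 (-1) x = W x))
    \<and> (a \<noteq> 0 \<longrightarrow>
       (\<forall>\<^sub>F x in nhds 0. summable (master_term 0 a b x) \<and>
           master 0 a b x = Ln (1 + a * x * exp (b * master 0 a b x)) / a))"
proof -
  have Lambert_minus_1:
    "\<forall>\<^sub>F x in nhds 0. summable (master_term 0 0 (-1) x) \<and> master 0 0 (-1) x = W x"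
    if "W analytic_on {0} \<and> W 0 = 0 \<and> (\<forall>\<^sub>F z in nhds 0. W z * exp (W z) = z)" for W
    using master_Lambert[of "-1" W] that eventually_summable_master_term[of 0 0 "-1"]
    by (auto elim: eventually_elim2)
  show ?thesis
    using master_binomial[of a] master_logarithmic[of a 0] master_logarithmic[of a b]
      master_exponential master_1_0_functional_eq[of b] master_0_0_functional_eq[of b]
      master_Lambert[of b] Lambert_minus_1
    by auto
qed

end
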